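(* Let $0<q<1/2$, $p=1-q$, and for integers $z\ge1$ let $$P_{SN}(z)=1-\sum_{k=0}^{z-1}e^{-zq/p}\frac{(zq/p)^k}{k!}\left(1-\left(\frac qp\right)^{z-k}\right).$$ Then for every integer $z\ge1$, $$P_{SN}(z)<\frac{1}{1-\frac qp}\frac{1}{\sqrt{2\pi z}}e^{-\left(\frac qp-1-\log\frac qp\right)z}+\frac12e^{-\left(\frac qp-1-\log\frac qp\right)z}.$$
   Context: $P_{SN}(z)$ is Nakamoto's approximation of the probability of success of a double-spend attack after $z$ confirmations. *)

theory Defs
  imports Complex_Main
begin

text \<open>Nakamoto's approximation of the double-spend success probability after z confirmations,
  with attacker hash share q and honest share p = 1 - q.\<close>
definition P_SN :: "real \<Rightarrow> nat \<Rightarrow> real" where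
  "P_SN q z = (let p = 1 - q; lam = real z * q / p in
     1 - (\<Sum>k<z. exp (- lam) * lam ^ k / fact k * (1 - (q / p) ^ (z - k))))"

end

theory Submission imports Defs "HOL-Analysis.Analysis" begin

(* With r = q/p and a = z r, P_SN(z) is the Poisson(a) tail P(N >= z) plus
   e^(-a) r^z (\<Sum>k<z. z^k/k!).  The tail is dominated termwise by the geometric series
   e^(-a) (a^z/z!) (\<Sum>i. r^i), and Stirling's lower bound z! >= sqrt(2 \<pi> z) (z/e)^z turns
   e^(-a) a^z/z! into e^(-(r - 1 - ln r) z) / sqrt(2 \<pi> z).  In the second part,
   \<Sum>k<n. n^k/k! < e^n/2 because each term n^(n-1-j)/(n-1-j)! is at most its mirror
   n^(n+j)/(n+j)!.  Stirling's bound comes from d(n) = ln n! + n - (n + 1/2) ln n, which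
   decreases and is bounded below, so it converges; Wallis' product identifies the limit
   as ln (2 \<pi>)/2. *)

lemma ln_add_one_ge:
  fixes x :: real assumes "0 \<le> x" shows "2 * x / (2 + x) \<le> ln (1 + x)"
proof -
  let ?f = "\<lambda>t::real. ln (1 + t) - 2 * t / (2 + t)"
  have "?f 0 \<le> ?f x"
  proof (rule DERIV_nonneg_imp_nondecreasing[OF assms])
    fix t :: real assume t: "0 \<le> t"
    have "(?f has_real_derivative 1 / (1 + t) - 4 / (2 + t)\<^sup>2) (at t)"
      using t by (auto intro!: derivative_eq_intros simp: power2_eq_square field_simps)
    moreover have "1 / (1 + t) - 4 / (2 + t)\<^sup>2 = t\<^sup>2 / ((1 + t) * (2 + t)\<^sup>2)"
    proof -
      have "1 + t \<noteq> 0" "2 + t \<noteq> 0" using t by auto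
      then show ?thesis by (simp add: divide_simps) (simp add: power2_eq_square algebra_simps)
    qed
    moreover have "0 \<le> t\<^sup>2 / ((1 + t) * (2 + t)\<^sup>2)" using t by simp
    ultimately show "\<exists>y. (?f has_real_derivative y) (at t) \<and> 0 \<le> y" by metis
  qed
  then show ?thesis by simp
qed

lemma ln_add_one_le:
  fixes x :: real assumes "0 \<le> x" shows "ln (1 + x) \<le> x - x\<^sup>2 / 2 + x ^ 3 / 3"
proof -
  let ?f = "\<lambda>t::real. t - t\<^sup>2 / 2 + t ^ 3 / 3 - ln (1 + t)"
  have "?f 0 \<le> ?f x"
  proof (rule DERIV_nonneg_imp_nondecreasing[OF assms])
    fix t :: real assume t: "0 \<le> t"
    have "(?f has_real_derivative t ^ 3 / (1 + t)) (at t)"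
      using t by (auto intro!: derivative_eq_intros simp: power2_eq_square power3_eq_cube field_simps)
    moreover have "0 \<le> t ^ 3 / (1 + t)" using t by simp
    ultimately show "\<exists>y. (?f has_real_derivative y) (at t) \<and> 0 \<le> y" by blast
  qed
  then show ?thesis by simp
qed

definition stirling_defect :: "nat \<Rightarrow> real" where
  "stirling_defect n = ln (fact n) + real n - (real n + 1/2) * ln (real n)"

lemma stirling_defect_diff:
  assumes "n \<ge> 1"
  shows "stirling_defect n - stirling_defect (Suc n) = (real n + 1/2) * ln (1 + 1 / real n) - 1"
proof -
  have "1 + 1 / real n = real (Suc n) / real n" using assms by (simp add: field_simps)
  then have l: "ln (1 + 1 / real n) = ln (real (Suc n)) - ln (real n)"
    using assms by (simp add: ln_div)
  have f: "ln (fact (Suc n) :: real) = ln (real (Suc n)) + ln (fact n)"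
    by (simp add: ln_mult)
  show ?thesis unfolding stirling_defect_def f l by (simp add: algebra_simps)
qed

lemma stirling_defect_Suc_le:
  assumes "n \<ge> 1"
  shows "stirling_defect (Suc n) \<le> stirling_defect n"
proof -
  have "1 / (real n + 1/2) = 2 * (1 / real n) / (2 + 1 / real n)"
    using assms by (simp add: field_simps)
  also have "\<dots> \<le> ln (1 + 1 / real n)" by (rule ln_add_one_ge) simp
  finally have "1 \<le> (real n + 1/2) * ln (1 + 1 / real n)"
    by (simp add: field_simps)
  then show ?thesis using stirling_defect_diff[OF assms] by simp
qed

lemma stirling_defect_diff_le:
  assumes "n \<ge> 1"
  shows "stirling_defect n - stirling_defect (Suc n) \<le> 1 / (2 * real n) - 1 / (2 * (real n + 1))"
proof -
  define y where "y = 1 / real n"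
  have n: "real n \<ge> 1" "real n > 0" using assms by simp_all
  have "(real n + 1/2) * ln (1 + y) - 1 \<le> (real n + 1/2) * (y - y\<^sup>2 / 2 + y ^ 3 / 3) - 1"
    by (intro diff_right_mono mult_left_mono ln_add_one_le) (auto simp: y_def)
  also have "\<dots> = (real n + 2) / (12 * real n ^ 3)"
    using n by (simp add: y_def field_simps power2_eq_square power3_eq_cube)
  also have "\<dots> = (real n + 2) * (real n + 1) / (12 * real n ^ 3 * (real n + 1))"
    using n by simp
  also have "\<dots> \<le> 6 * real n * real n / (12 * real n ^ 3 * (real n + 1))"
    using mult_nonneg_nonneg[of "5 * real n + 2" "real n - 1"] n
    by (intro divide_right_mono) (simp_all add: algebra_simps)
  also have "\<dots> = 1 / (2 * real n) - 1 / (2 * (real n + 1))"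
    using n by (simp add: divide_simps power3_eq_cube)
  finally show ?thesis using stirling_defect_diff[OF assms] by (simp add: y_def algebra_simps)
qed

lemma stirling_defect_ge_half:
  assumes "n \<ge> 1"
  shows "1/2 + 1 / (2 * real n) \<le> stirling_defect n"
  using assms
proof (induction n rule: nat_induct_at_least)
  case base
  then show ?case by (simp add: stirling_defect_def)
next
  case (Suc n)
  then show ?case using stirling_defect_diff_le[of n] by (simp add: algebra_simps)
qed

definition wallis_product :: "nat \<Rightarrow> real" where
  "wallis_product n = (\<Prod>k=1..n. 4 * real k ^ 2 / (4 * real k ^ 2 - 1))"

lemma wallis_product_eq:
  "wallis_product n = (2 ^ n * fact n) ^ 4 / ((fact (2 * n)) ^ 2 * (2 * real n + 1))"
  unfolding wallis_product_def
proof (induction n)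
  case 0
  then show ?case by simp
next
  case (Suc n)
  have step: "F ^ 4 / (G\<^sup>2 * (2 * m + 1)) * (4 * w\<^sup>2 / ((2 * m + 1) * (2 * m + 3)))
      = (2 * (w * F)) ^ 4 / (((2 * m + 2) * (2 * m + 1) * G)\<^sup>2 * (2 * w + 1))"
    if "G > 0" "m \<ge> 0" "w = m + 1" for F G m w :: real
  proof -
    have d: "G\<^sup>2 * (2 * m + 1) * ((2 * m + 1) * (2 * m + 3)) \<noteq> 0"
      "((2 * m + 2) * (2 * m + 1) * G)\<^sup>2 * (2 * (m + 1) + 1) \<noteq> 0"
      using that by auto
    show ?thesis unfolding \<open>w = m + 1\<close> times_divide_times_eq frac_eq_eq[OF d] by algebra
  qed
  have "4 * real (Suc n) ^ 2 - 1 = (2 * real n + 1) * (2 * real n + 3)"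
    by (simp add: power2_eq_square algebra_simps)
  then have "(\<Prod>k=1..Suc n. 4 * real k ^ 2 / (4 * real k ^ 2 - 1))
      = (2 ^ n * fact n) ^ 4 / ((fact (2 * n))\<^sup>2 * (2 * real n + 1))
        * (4 * real (Suc n) ^ 2 / ((2 * real n + 1) * (2 * real n + 3)))"
    by (simp only: Suc.IH prod.nat_ivl_Suc' le_add1 mult.commute flip: One_nat_def)
  also have "\<dots> = (2 * (real (Suc n) * (2 ^ n * fact n))) ^ 4
      / (((2 * real n + 2) * (2 * real n + 1) * fact (2 * n))\<^sup>2 * (2 * real (Suc n) + 1))"
    by (rule step) simp_all
  also have "\<dots> = (2 ^ Suc n * fact (Suc n)) ^ 4 / ((fact (2 * Suc n))\<^sup>2 * (2 * real (Suc n) + 1))"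
    by (simp add: algebra_simps)
  finally show ?case .
qed

lemma ln_wallis_product_eq:
  assumes "n \<ge> 1"
  shows "ln (2 * (2 * real n + 1) / real n * wallis_product n)
           = 2 * (2 * stirling_defect n - stirling_defect (2 * n))"
proof -
  have n: "real n > 0" using assms by simp
  have "2 * (2 * real n + 1) / real n * wallis_product n
          = 2 * (2 ^ n * fact n) ^ 4 / (real n * (fact (2 * n))\<^sup>2)"
    unfolding wallis_product_eq using n by (simp add: divide_simps)
  moreover have "ln (real (2 * n)) = ln 2 + ln (real n)"
    using n by (simp add: ln_mult)
  ultimately show ?thesis
    using n by (simp add: stirling_defect_def ln_div ln_mult ln_realpow algebra_simps)
qed

lemma decseq_stirling_defect_Suc: "decseq (\<lambda>n. stirling_defect (Suc n))"
  by (rule decseq_SucI) (simp add: stirling_defect_Suc_le)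

lemma convergent_stirling_defect: "convergent stirling_defect"
proof -
  have "1/2 \<le> stirling_defect (Suc n)" for n
  proof -
    have "0 \<le> 1 / (2 * real (Suc n))" by simp
    with stirling_defect_ge_half[of "Suc n"] show ?thesis by linarith
  qed
  then obtain l where "(\<lambda>n. stirling_defect (Suc n)) \<longlonglongrightarrow> l"
    using decseq_convergent[OF decseq_stirling_defect_Suc] by blast
  then show ?thesis
    by (auto simp: convergent_def filterlim_sequentially_Suc)
qed

lemma ln_wallis_tendsto:
  "(\<lambda>n. ln (2 * (2 * real n + 1) / real n * wallis_product n))
     \<longlonglongrightarrow> ln (2 * pi)"
proof -
  have "(\<lambda>n. 2 * (2 + inverse (real n))) \<longlonglongrightarrow> 2 * (2 + 0)"
    by (intro tendsto_intros lim_inverse_n)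
  moreover have "\<forall>\<^sub>F n in sequentially. 2 * (2 + inverse (real n)) = 2 * (2 * real n + 1) / real n"
    by (auto simp: eventually_sequentially field_simps intro!: exI[of _ 1])
  ultimately have "(\<lambda>n. 2 * (2 * real n + 1) / real n) \<longlonglongrightarrow> 4"
    using Lim_transform_eventually by force
  then have "(\<lambda>n. ln (2 * (2 * real n + 1) / real n
                 * wallis_product n)) \<longlonglongrightarrow> ln (4 * (pi / 2))"
    using wallis by (intro tendsto_ln tendsto_mult) (simp_all add: wallis_product_def)
  then show ?thesis by simp
qed

lemma stirling_defect_tendsto: "stirling_defect \<longlonglongrightarrow> ln (2 * pi) / 2"
proof -
  obtain l where l: "stirling_defect \<longlonglongrightarrow> l"
    using convergent_stirling_defect by (auto simp: convergent_def)
  then have "(\<lambda>n. stirling_defect (2 * n)) \<longlonglongrightarrow> l"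
    using LIMSEQ_subseq_LIMSEQ[of _ _ "\<lambda>n. 2 * n"] by (simp add: strict_mono_def o_def)
  with l have "(\<lambda>n. 2 * (2 * stirling_defect n - stirling_defect (2 * n))) \<longlonglongrightarrow> 2 * l"
    by (auto intro!: tendsto_eq_intros)
  moreover have "(\<lambda>n. 2 * (2 * stirling_defect n - stirling_defect (2 * n))) \<longlonglongrightarrow> ln (2 * pi)"
    using ln_wallis_tendsto
  proof (rule Lim_transform_eventually)
    show "\<forall>\<^sub>F n in sequentially.
        ln (2 * (2 * real n + 1) / real n * wallis_product n)
          = 2 * (2 * stirling_defect n - stirling_defect (2 * n))"
      using ln_wallis_product_eq eventually_sequentially by blast
  qed
  ultimately have "l = ln (2 * pi) / 2"
    using LIMSEQ_unique by fastforce
  with l show ?thesis by simp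
qed

lemma stirling_lower_bound:
  assumes "n \<ge> 1"
  shows "sqrt (2 * pi * real n) * real n ^ n * exp (- real n) \<le> fact n"
proof -
  have n: "real n > 0" using assms by simp
  have "(\<lambda>k. stirling_defect (Suc k)) \<longlonglongrightarrow> ln (2 * pi) / 2"
    using stirling_defect_tendsto by (simp add: filterlim_sequentially_Suc)
  with decseq_stirling_defect_Suc have "ln (2 * pi) / 2 \<le> stirling_defect (Suc (n - 1))"
    by (rule decseq_ge)
  then have "ln (sqrt (2 * pi * real n) * real n ^ n * exp (- real n)) \<le> ln (fact n)"
    using assms n
    by (simp add: stirling_defect_def ln_mult ln_realpow ln_sqrt add_divide_distrib algebra_simps)
  then show ?thesis using n by simp
qed

lemma pow_div_fact_mirror_le:
  assumes "m + j + 1 = n"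
  shows "real n ^ m / fact m \<le> real n ^ (m + 2 * j + 1) / fact (m + 2 * j + 1)"
proof -
  define t where "t k = real n ^ k / fact k" for k
  have t_Suc: "t (Suc k) = t k * (real n / (real k + 1))" for k
    by (simp add: t_def field_simps)
  have "t m \<le> t (m + 2 * j + 1)"
    using assms
  proof (induction j arbitrary: m)
    case 0
    then have "real n = real m + 1" by auto
    then show ?case using t_Suc[of m] by simp
  next
    case (Suc j)
    have n: "real n = real m + real j + 2" using Suc.prems by auto
    have "t m = t (m + 1) * ((real m + 1) / real n)"
      using t_Suc[of m] n by (simp add: field_simps)
    also have "\<dots> \<le> t (m + 2 * j + 2) * ((real m + 1) / real n)"
      using Suc.IH[of "m + 1"] Suc.prems n by (intro mult_right_mono) simp_all
    also have "\<dots> \<le> t (m + 2 * j + 2) * (real n / (real m + 2 * real j + 3))"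
    proof (rule mult_left_mono)
      have "(real m + 1) * (real m + 2 * real j + 3) \<le> real n * real n"
        unfolding n by (simp add: algebra_simps)
      then show "(real m + 1) / real n \<le> real n / (real m + 2 * real j + 3)"
        using n by (simp add: field_simps)
    qed (simp add: t_def)
    also have "\<dots> = t (m + 2 * Suc j + 1)"
      using t_Suc[of "m + 2 * j + 2"] by (simp add: algebra_simps)
    finally show ?case .
  qed
  then show ?thesis by (simp add: t_def)
qed

lemma exp_sums_real: "(\<lambda>k. x ^ k / fact k) sums exp (x :: real)"
  using exp_converges[of x] by (simp add: divide_inverse mult.commute)

lemma sum_pow_div_fact_less_half_exp:
  assumes "n \<ge> 1"
  shows "(\<Sum>k<n. real n ^ k / fact k) < exp (real n) / 2"
proof -
  define t where "t k = real n ^ k / fact k" for k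
  have "(\<Sum>k<n. t k) = (\<Sum>j<n. t (n - Suc j))"
    by (rule sum.nat_diff_reindex[symmetric])
  also have "\<dots> \<le> (\<Sum>j<n. t (n + j))"
  proof (rule sum_mono)
    fix j assume "j \<in> {..<n}"
    then show "t (n - Suc j) \<le> t (n + j)"
      using pow_div_fact_mirror_le[of "n - Suc j" j n] by (simp add: t_def add.commute)
  qed
  also have "\<dots> = (\<Sum>k\<in>{n..<n + n}. t k)"
    using sum.shift_bounds_nat_ivl[of t 0 n n] by (simp add: atLeast0LessThan add.commute)
  finally have "2 * (\<Sum>k<n. t k) \<le> (\<Sum>k<n + n. t k)"
    using sum.atLeastLessThan_concat[of 0 n "n + n" t] by (simp add: atLeast0LessThan)
  also have "\<dots> < suminf t"
    using exp_sums_real[of "real n"] assms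
    by (intro sum_less_suminf) (auto simp: t_def sums_iff)
  also have "suminf t = exp (real n)"
    using exp_sums_real[of "real n"] unfolding t_def by (simp add: sums_iff)
  finally show ?thesis unfolding t_def by simp
qed

lemma fact_mult_pow_le_fact_add: "fact z * real z ^ j \<le> (fact (z + j) :: real)"
proof (induction j)
  case 0
  then show ?case by simp
next
  case (Suc j)
  have "fact z * real z ^ Suc j = (fact z * real z ^ j) * real z" by simp
  also have "\<dots> \<le> fact (z + j) * real (Suc (z + j))"
    using Suc.IH by (intro mult_mono) auto
  finally show ?case by (simp add: mult.commute)
qed

lemma poisson_upper_tail_le_geometric:
  fixes r :: real
  assumes "0 \<le> r" "r < 1" and a: "a = real z * r"
  shows "1 - (\<Sum>k<z. exp (- a) * a ^ k / fact k) \<le> exp (- a) * (a ^ z / fact z / (1 - r))"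
proof -
  have le: "a ^ (i + z) / fact (i + z) \<le> a ^ z / fact z * r ^ i" for i
  proof -
    have "a ^ (i + z) / fact (i + z) = a ^ z * r ^ i * (real z ^ i / fact (z + i))"
      unfolding a by (simp add: power_add power_mult_distrib add.commute)
    also have "\<dots> \<le> a ^ z * r ^ i * (1 / fact z)"
      using fact_mult_pow_le_fact_add[of z i] assms
      by (intro mult_left_mono) (simp_all add: field_simps)
    finally show ?thesis by simp
  qed
  have "(\<lambda>i. a ^ z / fact z * r ^ i) sums (a ^ z / fact z * (1 / (1 - r)))"
    using assms by (intro sums_mult geometric_sums) simp
  then have "exp a - (\<Sum>k<z. a ^ k / fact k) \<le> a ^ z / fact z * (1 / (1 - r))"
    using sums_le[OF le sums_split_initial_segment[OF exp_sums_real]] by blast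
  then have "exp (- a) * (exp a - (\<Sum>k<z. a ^ k / fact k)) \<le> exp (- a) * (a ^ z / fact z / (1 - r))"
    by (intro mult_left_mono) simp_all
  moreover have "exp (- a) * (exp a - (\<Sum>k<z. a ^ k / fact k)) = 1 - (\<Sum>k<z. exp (- a) * a ^ k / fact k)"
    by (simp add: right_diff_distrib sum_distrib_left exp_minus field_simps)
  ultimately show ?thesis by simp
qed

lemma poisson_upper_tail_le:
  fixes r :: real
  assumes "0 < r" "r < 1" "z \<ge> 1"
  defines "a \<equiv> real z * r"
  shows "1 - (\<Sum>k<z. exp (- a) * a ^ k / fact k)
           \<le> 1 / (1 - r) * (1 / sqrt (2 * pi * real z)) * (exp (- a) * exp (real z) * r ^ z)"
proof -
  have z: "real z > 0" using assms by simp
  have stirling: "real z ^ z / fact z \<le> exp (real z) / sqrt (2 * pi * real z)"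
    using stirling_lower_bound[OF \<open>z \<ge> 1\<close>] z
    by (simp add: field_simps exp_minus)
  have "1 - (\<Sum>k<z. exp (- a) * a ^ k / fact k) \<le> exp (- a) * (a ^ z / fact z / (1 - r))"
    using assms by (intro poisson_upper_tail_le_geometric) simp_all
  also have "\<dots> = exp (- a) * r ^ z / (1 - r) * (real z ^ z / fact z)"
    unfolding a_def power_mult_distrib by (simp add: field_simps)
  also have "\<dots> \<le> exp (- a) * r ^ z / (1 - r) * (exp (real z) / sqrt (2 * pi * real z))"
    using assms stirling by (intro mult_left_mono) simp_all
  also have "\<dots> = 1 / (1 - r) * (1 / sqrt (2 * pi * real z)) * (exp (- a) * exp (real z) * r ^ z)"
    by (simp add: ac_simps)
  finally show ?thesis .
qed

lemma P_SN_eq_poisson_tail_plus: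
  assumes "r = q / (1 - q)" and "a = real z * r"
  shows "P_SN q z = (1 - (\<Sum>k<z. exp (- a) * a ^ k / fact k))
                    + exp (- a) * r ^ z * (\<Sum>k<z. real z ^ k / fact k)"
proof -
  have "exp (- a) * a ^ k / fact k * r ^ (z - k) = exp (- a) * r ^ z * (real z ^ k / fact k)"
    if "k < z" for k
  proof -
    have "r ^ k * r ^ (z - k) = r ^ z" using that by (simp flip: power_add)
    then show ?thesis unfolding assms(2) power_mult_distrib by (simp add: field_simps)
  qed
  then have "(\<Sum>k<z. exp (- a) * a ^ k / fact k * r ^ (z - k))
               = exp (- a) * r ^ z * (\<Sum>k<z. real z ^ k / fact k)"
    unfolding sum_distrib_left by (intro sum.cong) simp_all
  moreover have "P_SN q z = 1 - (\<Sum>k<z. exp (- a) * a ^ k / fact k * (1 - r ^ (z - k)))"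
    unfolding P_SN_def assms by (simp add: Let_def)
  ultimately show ?thesis
    by (simp add: right_diff_distrib sum_subtractf)
qed

lemma exp_rate_eq:
  assumes "r > 0"
  shows "exp (- (r - 1 - ln r) * real z) = exp (- (real z * r)) * exp (real z) * r ^ z"
proof -
  have "exp (- (r - 1 - ln r) * real z) = exp (- (real z * r)) * exp (real z) * exp (real z * ln r)"
    by (simp add: algebra_simps flip: exp_add)
  also have "exp (real z * ln r) = r ^ z"
    using assms by (simp add: exp_of_nat_mult)
  finally show ?thesis .
qed

theorem mainTheorem15:
  fixes q p :: real and z :: nat
  assumes "0 < q" and "q < 1/2" and "p = 1 - q" and "z \<ge> 1"
  shows "P_SN q z < 1 / (1 - q / p) * (1 / sqrt (2 * pi * real z))
                      * exp (- (q / p - 1 - ln (q / p)) * real z)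
                    + 1/2 * exp (- (q / p - 1 - ln (q / p)) * real z)"
proof -
  define r where "r = q / p"
  define a where "a = real z * r"
  have r: "0 < r" "r < 1"
    using assms by (simp_all add: r_def field_simps)
  have rate: "exp (- (r - 1 - ln r) * real z) = exp (- a) * exp (real z) * r ^ z"
    unfolding a_def by (rule exp_rate_eq[OF r(1)])
  have "exp (- a) * r ^ z * (\<Sum>k<z. real z ^ k / fact k) < exp (- a) * r ^ z * (exp (real z) / 2)"
    using sum_pow_div_fact_less_half_exp[OF assms(4)] r by simp
  moreover have "1 - (\<Sum>k<z. exp (- a) * a ^ k / fact k)
      \<le> 1 / (1 - r) * (1 / sqrt (2 * pi * real z)) * (exp (- a) * exp (real z) * r ^ z)"
    unfolding a_def using r assms(4) by (rule poisson_upper_tail_le)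
  moreover have "P_SN q z = (1 - (\<Sum>k<z. exp (- a) * a ^ k / fact k))
                    + exp (- a) * r ^ z * (\<Sum>k<z. real z ^ k / fact k)"
    using assms(3) by (intro P_SN_eq_poisson_tail_plus) (simp_all add: r_def a_def)
  ultimately show ?thesis
    unfolding r_def[symmetric] rate by (simp add: ac_simps)
qed

end
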